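(* Let $F\subseteq\omega$ be a $\Pi^1_1$ set. Then there exists a computable function $g$ such that for every $p\in\omega$, $g(p)$ is an $\iota$-index of a c.e. effective quasi-Polish space $X=\iota(g(p))$ such that $X$ is metrizable if $p\in F$, and $X$ is not $T_1$ if $p\notin F$.
   Context: Let $(W_n)$ be a standard numbering of c.e. subsets of $\omega$, $V_n=\{(i,j)\mid\langle i,j\rangle\in W_n\}$, and $t$ a computable function with $V_{t(n)}$ the transitive closure of $V_n$. For a transitive relation $\prec$ on $\omega$, an ideal is a non-empty lower, directed subset of $\omega$; $\mathcal{I}(\prec)$ is the space of ideals with topology generated by $[k]_\prec=\{I\mid k\in I\}$, an effective space with basic opens numbered by $k$. The numbering $\iota$ is defined by $\iota(n)=\mathcal{I}(V_{t(n)})$; an $\iota$-index of $X$ is an $n$ with $X=\iota(n)$. Every $\iota(n)$ is an effective quasi-Polish space; it is c.e. (overt) if $\{k\mid[k]_{V_{t(n)}}\neq\emptyset\}$ is c.e. *)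

theory Defs
  imports "HOL-Analysis.Analysis" "HOL-Library.Nat_Bijection"
begin

datatype recf =
    Zr
  | Sc
  | Proj nat
  | Comp recf "recf list"
  | Prim recf recf
  | Mn recf

inductive eval :: "recf \<Rightarrow> nat list \<Rightarrow> nat \<Rightarrow> bool" where
  ev_Zr: "eval Zr xs 0"
| ev_Sc: "eval Sc (x # xs) (Suc x)"
| ev_Proj: "i < length xs \<Longrightarrow> eval (Proj i) xs (xs ! i)"
| ev_Comp: "list_all2 (\<lambda>g y. eval g xs y) gs ys \<Longrightarrow> eval f ys z \<Longrightarrow> eval (Comp f gs) xs z"
| ev_Prim0: "eval f xs y \<Longrightarrow> eval (Prim f g) (0 # xs) y"
| ev_PrimS: "eval (Prim f g) (n # xs) y \<Longrightarrow> eval g (y # n # xs) z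
             \<Longrightarrow> eval (Prim f g) (Suc n # xs) z"
| ev_Mn: "eval f (n # xs) 0 \<Longrightarrow> (\<forall>m<n. \<exists>y. eval f (m # xs) (Suc y))
          \<Longrightarrow> eval (Mn f) xs n"

fun encode :: "recf \<Rightarrow> nat" where
  "encode Zr = prod_encode (0, 0)"
| "encode Sc = prod_encode (1, 0)"
| "encode (Proj i) = prod_encode (2, i)"
| "encode (Comp f gs) = prod_encode (3, prod_encode (encode f, list_encode (map encode gs)))"
| "encode (Prim f g) = prod_encode (4, prod_encode (encode f, encode g))"
| "encode (Mn f) = prod_encode (5, encode f)"

text \<open>Standard numbering of c.e. sets: W n is the domain of the unary program with code n
  (empty if n is not a code).\<close>
definition W :: "nat \<Rightarrow> nat set" where
  "W n = {x. \<exists>r y. encode r = n \<and> eval r [x] y}"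

definition computable :: "(nat \<Rightarrow> nat) \<Rightarrow> bool" where
  "computable g \<longleftrightarrow> (\<exists>r. \<forall>p. eval r [p] (g p))"

definition ce_set :: "nat set \<Rightarrow> bool" where
  "ce_set A \<longleftrightarrow> (\<exists>n. A = W n)"

definition computable_rel2 :: "(nat \<Rightarrow> nat \<Rightarrow> bool) \<Rightarrow> bool" where
  "computable_rel2 R \<longleftrightarrow> (\<exists>r. \<forall>a b. eval r [a, b] (if R a b then 1 else 0))"

text \<open>Pi^1_1 subsets of omega (Kleene normal form): p \<in> F iff for every f : omega \<rightarrow> omega
  there is n with R(p, code of the initial segment f(0),...,f(n-1)), R computable.\<close>
definition Pi11 :: "nat set \<Rightarrow> bool" where
  "Pi11 F \<longleftrightarrow> (\<exists>R. computable_rel2 R \<and>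
     (\<forall>p. p \<in> F \<longleftrightarrow> (\<forall>f::nat \<Rightarrow> nat. \<exists>n. R p (list_encode (map f [0..<n])))))"

definition V :: "nat \<Rightarrow> (nat \<times> nat) set" where
  "V n = {(i, j). prod_encode (i, j) \<in> W n}"

definition is_ideal :: "(nat \<times> nat) set \<Rightarrow> nat set \<Rightarrow> bool" where
  "is_ideal R I \<longleftrightarrow> I \<noteq> {}
     \<and> (\<forall>j\<in>I. \<forall>i. (i, j) \<in> R \<longrightarrow> i \<in> I)
     \<and> (\<forall>i\<in>I. \<forall>j\<in>I. \<exists>k\<in>I. (i, k) \<in> R \<and> (j, k) \<in> R)"

definition basic_open :: "(nat \<times> nat) set \<Rightarrow> nat \<Rightarrow> nat set set" where
  "basic_open R k = {I. is_ideal R I \<and> k \<in> I}"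

definition ideal_space :: "(nat \<times> nat) set \<Rightarrow> nat set topology" where
  "ideal_space R = topology_generated_by (range (basic_open R))"

definition iota :: "nat \<Rightarrow> nat set topology" where
  "iota n = ideal_space ((V n)\<^sup>+)"

definition ce_space_index :: "nat \<Rightarrow> bool" where
  "ce_space_index n \<longleftrightarrow> ce_set {k. basic_open ((V n)\<^sup>+) k \<noteq> {}}"

end

theory Submission
  imports Defs "HOL-Library.Sublist"
begin

(*
  By Kleene's normal form, p is in the Pi^1_1 set F iff the tree of finite sequences none of
  whose initial segments is accepted by a computable relation R has no infinite branch.
  Uniformly in p we enumerate an order on nat: the nodes of this tree ordered by extension,
  together with a top element 0.  Its ideals are nat itself and the sets of nodes along infinite
  branches.  Hence for p in F the space of ideals is a single point, thus metrizable; otherwise a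
  branch ideal lies strictly below nat, every open set containing it contains nat, and the space
  is not T1.  As nat is an ideal, every basic open set is nonempty, so the space is c.e.
*)

lemma topspace_ideal_space: "topspace (ideal_space R) = {I. is_ideal R I}"
  unfolding ideal_space_def topology_generated_by_topspace basic_open_def
  by (auto simp: is_ideal_def)

lemma is_ideal_nonempty: "is_ideal R I \<Longrightarrow> I \<noteq> {}"
  unfolding is_ideal_def by blast

lemma is_ideal_downward: "is_ideal R I \<Longrightarrow> j \<in> I \<Longrightarrow> (i, j) \<in> R \<Longrightarrow> i \<in> I"
  unfolding is_ideal_def by blast

lemma is_ideal_directed: "is_ideal R I \<Longrightarrow> i \<in> I \<Longrightarrow> j \<in> I \<Longrightarrow> \<exists>k\<in>I. (i, k) \<in> R \<and> (j, k) \<in> R"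
  unfolding is_ideal_def by blast

lemma openin_ideal_space_upclosed:
  assumes "openin (ideal_space R) U" "I \<in> U" "is_ideal R J" "I \<subseteq> J"
  shows "J \<in> U"
proof -
  have "generate_topology_on (range (basic_open R)) U"
    using assms(1) unfolding ideal_space_def by (rule openin_topology_generated_by)
  then show ?thesis
    using assms(2) by induction (use assms(3,4) in \<open>auto simp: basic_open_def\<close>)
qed

lemma not_t1_space_ideal_space:
  assumes "is_ideal R I" "is_ideal R J" "I \<subset> J"
  shows "\<not> t1_space (ideal_space R)"
  unfolding t1_space_def topspace_ideal_space
  using assms openin_ideal_space_upclosed by blast

lemma metrizable_space_topspace_singleton:
  assumes "topspace X = {a}"
  shows "metrizable_space X"
proof -
  have "X = discrete_topology {a}"
    unfolding topology_eq
  proof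
    fix S
    have "openin X S \<longleftrightarrow> S = {} \<or> S = {a}"
      using assms openin_subset[of X S] by (metis openin_empty openin_topspace subset_singletonD)
    then show "openin X S \<longleftrightarrow> openin (discrete_topology {a}) S"
      by auto
  qed
  then show ?thesis by simp
qed

section \<open>The tree order of a set of sequences\<close>

(* Node 0 lies above all others and the sequence l sits at node l.  Sequences are stored reversed,
   so that the parent of a node is computed by tl. *)
definition node :: "nat list \<Rightarrow> nat" where
  "node l = Suc (list_encode (rev l))"

definition tree_order :: "nat list set \<Rightarrow> (nat \<times> nat) set" where
  "tree_order T = {(i, 0) | i. True} \<union> {(node l, node (l @ [x])) | l x. l @ [x] \<in> T}"

lemma node_inject [simp]: "node l = node l' \<longleftrightarrow> l = l'"
  unfolding node_def by (simp add: list_encode_eq)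

lemma node_neq_0 [simp]: "node l \<noteq> 0"
  unfolding node_def by simp

lemma node_cases: obtains "i = 0" | l where "i = node l"
  by (metis node_def list_decode_inverse not0_implies_Suc rev_rev_ident)

lemma tree_order_from_node:
  assumes "(node l, j) \<in> tree_order T"
  obtains "j = 0" | x where "j = node (l @ [x])" "l @ [x] \<in> T"
  using assms unfolding tree_order_def by auto

lemma tree_order_from_0: "(0, j) \<in> (tree_order T)\<^sup>+ \<Longrightarrow> j = 0"
  by (induction rule: trancl_induct) (auto simp: tree_order_def)

lemma trancl_tree_order_from_node:
  assumes "(node l, j) \<in> (tree_order T)\<^sup>+"
  shows "j = 0 \<or> (\<exists>l'. j = node l' \<and> strict_prefix l l' \<and> l' \<in> T)"
  using assms
proof (induction rule: trancl_induct)
  case (base j)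
  then show ?case
    by (cases rule: tree_order_from_node) (auto intro: strict_prefixI')
next
  case (step j k)
  show ?case
  proof (cases "j = 0")
    case True
    then show ?thesis using step.hyps(2) tree_order_from_0 by blast
  next
    case False
    then obtain l' where l': "j = node l'" "strict_prefix l l'"
      using step.IH by blast
    from step.hyps(2) have "(node l', k) \<in> tree_order T"
      unfolding l'(1) .
    then show ?thesis
      by (cases rule: tree_order_from_node)
        (use l'(2) in \<open>auto intro: strict_prefixI' prefix_order.less_trans\<close>)
  qed
qed

lemma tree_order_top: "(i, 0) \<in> (tree_order T)\<^sup>+"
  by (rule r_into_trancl) (simp add: tree_order_def)

lemma is_ideal_tree_order_UNIV: "is_ideal ((tree_order T)\<^sup>+) UNIV"
  unfolding is_ideal_def using tree_order_top by blast

lemma tree_order_to_node: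
  assumes "(i, node l) \<in> tree_order T"
  shows "l \<noteq> [] \<and> i = node (butlast l)"
  using assms unfolding tree_order_def by auto

lemma prefix_compatible_branch:
  assumes "\<And>l1 l2. l1 \<in> S \<Longrightarrow> l2 \<in> S \<Longrightarrow> \<exists>l. prefix l1 l \<and> prefix l2 l"
  obtains f :: "nat \<Rightarrow> 'a" where "\<And>l. l \<in> S \<Longrightarrow> map f [0..<length l] = l"
proof
  define f where "f m = (SOME l. l \<in> S \<and> m < length l) ! m" for m
  fix l assume l: "l \<in> S"
  show "map f [0..<length l] = l"
  proof (rule nth_equalityI)
    fix m assume "m < length (map f [0..<length l])"
    then have m: "m < length l" by simp
    define l0 where "l0 = (SOME l. l \<in> S \<and> m < length l)"
    have l0: "l0 \<in> S" "m < length l0"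
      using someI[of "\<lambda>l. l \<in> S \<and> m < length l" l] l m unfolding l0_def by auto
    obtain l' where "prefix l0 l'" "prefix l l'"
      using assms[OF l0(1) l] by blast
    then have "l0 ! m = l ! m"
      using l0(2) m by (auto simp: prefix_def) (metis nth_append)
    moreover have "f m = l0 ! m"
      unfolding f_def l0_def ..
    ultimately show "map f [0..<length l] ! m = l ! m"
      using m by simp
  qed simp
qed

lemma directed_prefixes_branch:
  assumes "S \<noteq> {}"
    and extend: "\<And>l. l \<in> S \<Longrightarrow> \<exists>l'\<in>S. strict_prefix l l'"
    and compatible: "\<And>l1 l2. l1 \<in> S \<Longrightarrow> l2 \<in> S \<Longrightarrow> \<exists>l. prefix l1 l \<and> prefix l2 l"
  shows "\<exists>f :: nat \<Rightarrow> 'a. \<forall>n. \<exists>l\<in>S. prefix (map f [0..<n]) l"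
proof -
  have long: "\<exists>l\<in>S. n \<le> length l" for n
  proof (induction n)
    case 0
    then show ?case
      using \<open>S \<noteq> {}\<close> by blast
  next
    case (Suc n)
    then obtain l where "l \<in> S" "n \<le> length l" by blast
    then obtain l' where l': "l' \<in> S" "strict_prefix l l'"
      using extend by blast
    then have "Suc n \<le> length l'"
      using prefix_length_less[OF l'(2)] \<open>n \<le> length l\<close> by simp
    with l'(1) show ?case by blast
  qed
  obtain f :: "nat \<Rightarrow> 'a" where f: "\<And>l. l \<in> S \<Longrightarrow> map f [0..<length l] = l"
    using compatible prefix_compatible_branch by blast
  show ?thesis
  proof (intro exI allI)
    fix n
    obtain l where l: "l \<in> S" "n \<le> length l"
      using long by blast
    then have "map f [0..<n] = take n l"
      using f[OF l(1)] by (metis take_map take_upt add_0 min.absorb1)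
    with l(1) show "\<exists>l\<in>S. prefix (map f [0..<n]) l"
      using take_is_prefix by metis
  qed
qed

lemma tree_order_ideal_branch:
  assumes prefix_closed: "\<And>l l'. l' \<in> T \<Longrightarrow> prefix l l' \<Longrightarrow> l \<in> T"
    and I: "is_ideal ((tree_order T)\<^sup>+) I" and "0 \<notin> I"
  obtains f where "\<And>n. map f [0..<n] \<in> T"
proof -
  define S where "S = {l \<in> T. node l \<in> I}"
  have above: "\<exists>l'. k = node l' \<and> strict_prefix l l' \<and> l' \<in> T"
    if "k \<in> I" "(node l, k) \<in> (tree_order T)\<^sup>+" for k l
    using trancl_tree_order_from_node[OF that(2)] that(1) \<open>0 \<notin> I\<close> by auto
  have extend: "\<exists>l'\<in>S. strict_prefix l l'" if l: "node l \<in> I" for l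
  proof -
    obtain k where "k \<in> I" "(node l, k) \<in> (tree_order T)\<^sup>+"
      using is_ideal_directed[OF I l l] by blast
    with above show ?thesis
      unfolding S_def by fastforce
  qed
  have "S \<noteq> {}"
  proof -
    obtain i where "i \<in> I"
      using is_ideal_nonempty[OF I] by blast
    with \<open>0 \<notin> I\<close> obtain l where "node l \<in> I"
      by (cases rule: node_cases[of i]) auto
    then show ?thesis
      using extend by blast
  qed
  moreover have "\<exists>l'\<in>S. strict_prefix l l'" if "l \<in> S" for l
    using that extend unfolding S_def by blast
  moreover have "\<exists>l. prefix l1 l \<and> prefix l2 l" if l12: "l1 \<in> S" "l2 \<in> S" for l1 l2
  proof -
    obtain k where k: "k \<in> I" "(node l1, k) \<in> (tree_order T)\<^sup>+" "(node l2, k) \<in> (tree_order T)\<^sup>+"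
      using is_ideal_directed[OF I] l12 unfolding S_def by blast
    obtain l where "k = node l" "strict_prefix l1 l"
      using above[OF k(1,2)] by blast
    moreover obtain l' where "k = node l'" "strict_prefix l2 l'"
      using above[OF k(1,3)] by blast
    ultimately show ?thesis
      using prefix_order.less_imp_le by auto
  qed
  ultimately obtain f :: "nat \<Rightarrow> nat" where f: "\<And>n. \<exists>l\<in>S. prefix (map f [0..<n]) l"
    using directed_prefixes_branch by blast
  show ?thesis
  proof (rule that)
    fix n
    from f obtain l where "l \<in> S" "prefix (map f [0..<n]) l" by blast
    then show "map f [0..<n] \<in> T"
      using prefix_closed unfolding S_def by blast
  qed
qed

lemma tree_order_branch_ideal:
  assumes branch: "\<And>n. map f [0..<n] \<in> T"
  shows "is_ideal ((tree_order T)\<^sup>+) (range (\<lambda>n. node (map f [0..<n])))"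
proof -
  define c where "c n = node (map f [0..<n])" for n
  have step: "(c n, c (Suc n)) \<in> tree_order T" for n
    unfolding tree_order_def c_def using branch[of "Suc n"] by auto
  have chain: "(c m, c n) \<in> (tree_order T)\<^sup>*" if "m \<le> n" for m n
    using that by (rule transitive_stepwise_le) (use step in \<open>auto intro: rtrancl_into_rtrancl\<close>)
  have pred: "i \<in> range c" if "(i, c n) \<in> tree_order T" for i n
  proof -
    have "butlast (map f [0..<n]) = map f [0..<n - 1]"
      by (cases n) simp_all
    then show ?thesis
      using tree_order_to_node[OF that[unfolded c_def]] unfolding c_def by auto
  qed
  have down: "i \<in> range c" if "(i, j) \<in> (tree_order T)\<^sup>+" "j \<in> range c" for i j
    using that by (induction rule: converse_trancl_induct) (auto intro: pred)
  have up: "(c m, c (Suc (max m n))) \<in> (tree_order T)\<^sup>+" for m n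
    using chain[of m "max m n"] step by (auto intro: rtrancl_into_trancl1)
  have "\<exists>k\<in>range c. (c m, k) \<in> (tree_order T)\<^sup>+ \<and> (c n, k) \<in> (tree_order T)\<^sup>+" for m n
    using up[of m n] up[of n m] by (auto simp: max.commute)
  then show ?thesis
    unfolding is_ideal_def c_def[symmetric] using down by auto
qed

lemma topspace_ideal_space_tree_order:
  assumes prefix_closed: "\<And>l l'. l' \<in> T \<Longrightarrow> prefix l l' \<Longrightarrow> l \<in> T"
    and no_branch: "\<And>f. \<exists>n. map f [0..<n] \<notin> T"
  shows "topspace (ideal_space ((tree_order T)\<^sup>+)) = {UNIV}"
proof -
  have "I = UNIV" if I: "is_ideal ((tree_order T)\<^sup>+) I" for I
  proof (cases "0 \<in> I")
    case True
    then show ?thesis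
      using is_ideal_downward[OF I True tree_order_top] by auto
  next
    case False
    then obtain f where "\<And>n. map f [0..<n] \<in> T"
      using tree_order_ideal_branch[of T I] prefix_closed I by blast
    with no_branch show ?thesis
      by blast
  qed
  then show ?thesis
    unfolding topspace_ideal_space using is_ideal_tree_order_UNIV by blast
qed

lemma not_t1_space_ideal_space_tree_order:
  assumes "\<And>n. map f [0..<n] \<in> T"
  shows "\<not> t1_space (ideal_space ((tree_order T)\<^sup>+))"
proof (rule not_t1_space_ideal_space)
  show "is_ideal ((tree_order T)\<^sup>+) (range (\<lambda>n. node (map f [0..<n])))"
    using assms by (rule tree_order_branch_ideal)
  show "is_ideal ((tree_order T)\<^sup>+) UNIV"
    by (rule is_ideal_tree_order_UNIV)
  show "range (\<lambda>n. node (map f [0..<n])) \<subset> UNIV"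
    by (metis UNIV_I node_neq_0 psubsetI imageE subset_UNIV)
qed

lemma basic_open_tree_order_nonempty: "basic_open ((tree_order T)\<^sup>+) k \<noteq> {}"
  unfolding basic_open_def using is_ideal_tree_order_UNIV by blast

definition kleene_tree :: "(nat \<Rightarrow> nat \<Rightarrow> bool) \<Rightarrow> nat \<Rightarrow> nat list set" where
  "kleene_tree R p = {l. \<forall>m \<le> length l. \<not> R p (list_encode (take m l))}"

lemma kleene_tree_prefix_closed:
  assumes "l' \<in> kleene_tree R p" "prefix l l'"
  shows "l \<in> kleene_tree R p"
  unfolding kleene_tree_def
proof (intro CollectI allI impI)
  fix m assume m: "m \<le> length l"
  from assms(2) obtain zs where "l' = l @ zs"
    by (auto simp: prefix_def)
  with m have "take m l' = take m l" "m \<le> length l'"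
    by simp_all
  with assms(1) show "\<not> R p (list_encode (take m l))"
    unfolding kleene_tree_def by auto
qed

lemma branch_in_kleene_tree_iff:
  "(\<forall>n. map f [0..<n] \<in> kleene_tree R p) \<longleftrightarrow> (\<forall>n. \<not> R p (list_encode (map f [0..<n])))"
  unfolding kleene_tree_def by (auto simp: take_map min_def)

section \<open>Recursive programs\<close>

lemma eval_deterministic: "eval f xs y \<Longrightarrow> eval f xs y' \<Longrightarrow> y = y'"
proof (induction f xs y arbitrary: y' rule: eval.induct)
  case (ev_Comp xs gs ys f z)
  from ev_Comp.prems obtain ys' where ys': "list_all2 (\<lambda>g y. eval g xs y) gs ys'" "eval f ys' y'"
    by (cases rule: eval.cases) auto
  have "ys = ys'"
    using ev_Comp.IH(1) ys'(1)
    by (induction gs arbitrary: ys ys') (auto simp: list_all2_Cons1)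
  then show ?case
    using ev_Comp.IH(2) ys'(2) by simp
next
  case (ev_Mn f n xs)
  from ev_Mn.prems obtain n' where n': "y' = n'" "eval f (n' # xs) 0" "\<forall>m<n'. \<exists>y. eval f (m # xs) (Suc y)"
    by (cases rule: eval.cases) auto
  show ?case
  proof (rule linorder_cases[of n n'])
    assume "n < n'"
    then show ?case
      using n' ev_Mn.IH(1) by fastforce
  next
    assume "n' < n"
    then show ?case
      using n' ev_Mn.IH(2) by fastforce
  qed (use n' in simp)
next
  case (ev_Prim0 f xs y g)
  from ev_Prim0.prems show ?case
    by (cases rule: eval.cases) (use ev_Prim0 in auto)
next
  case (ev_PrimS f g n xs y z)
  from ev_PrimS.prems show ?case
    by (cases rule: eval.cases) (use ev_PrimS in auto)
qed (auto elim: eval.cases)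

lemma eval_Comp_iff:
  assumes "list_all2 (\<lambda>g y. eval g xs y) gs ys"
  shows "eval (Comp f gs) xs z \<longleftrightarrow> eval f ys z"
proof
  assume "eval (Comp f gs) xs z"
  then obtain ys' where "list_all2 (\<lambda>g y. eval g xs y) gs ys'" "eval f ys' z"
    by (cases rule: eval.cases) auto
  moreover from this(1) assms have "ys' = ys"
    by (induction gs arbitrary: ys ys') (auto simp: list_all2_Cons1 dest: eval_deterministic)
  ultimately show "eval f ys z" by simp
qed (rule ev_Comp[OF assms])

lemma eval_Mn_halts_iff:
  assumes "\<And>a. eval h (a # xs) v"
  shows "(\<exists>y. eval (Mn h) xs y) \<longleftrightarrow> v = 0"
proof
  assume "\<exists>y. eval (Mn h) xs y"
  then obtain y where "eval (Mn h) xs y" ..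
  then have "eval h (y # xs) 0"
    by (cases rule: eval.cases) auto
  with assms[of y] show "v = 0"
    by (rule eval_deterministic)
next
  assume "v = 0"
  have "eval (Mn h) xs 0"
    by (rule ev_Mn) (use assms[of 0] \<open>v = 0\<close> in auto)
  then show "\<exists>y. eval (Mn h) xs y" ..
qed

lemma eval_Comp1: "eval g xs a \<Longrightarrow> eval f [a] z \<Longrightarrow> eval (Comp f [g]) xs z"
  by (rule ev_Comp) auto

lemma eval_Comp2: "eval g1 xs a \<Longrightarrow> eval g2 xs b \<Longrightarrow> eval f [a, b] z \<Longrightarrow> eval (Comp f [g1, g2]) xs z"
  by (rule ev_Comp) auto

lemma eval_Comp3:
  "eval g1 xs a \<Longrightarrow> eval g2 xs b \<Longrightarrow> eval g3 xs c \<Longrightarrow> eval f [a, b, c] z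
    \<Longrightarrow> eval (Comp f [g1, g2, g3]) xs z"
  by (rule ev_Comp) auto

lemma eval_Proj_0: "eval (Proj 0) (x # xs) x"
  using ev_Proj[of 0 "x # xs"] by simp

lemma eval_Proj_1: "eval (Proj 1) (x # y # xs) y"
  using ev_Proj[of 1 "x # y # xs"] by simp

lemma eval_Proj_2: "eval (Proj 2) (x # y # z # xs) z"
  using ev_Proj[of 2 "x # y # z # xs"] by simp

lemma eval_Proj_3: "eval (Proj 3) (x # y # z # w # xs) w"
  using ev_Proj[of 3 "x # y # z # w # xs"] by simp

lemma eval_value_eq: "eval f xs z \<Longrightarrow> z = z' \<Longrightarrow> eval f xs z'"
  by simp

lemma eval_Prim:
  assumes "eval f xs (h 0)" "\<And>n. eval g (h n # n # xs) (h (Suc n))"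
  shows "eval (Prim f g) (n # xs) (h n)"
proof (induction n)
  case 0
  show ?case
    using assms(1) by (rule ev_Prim0)
next
  case (Suc n)
  show ?case
    using Suc.IH assms(2) by (rule ev_PrimS)
qed

primrec prog_const :: "nat \<Rightarrow> recf" where
  "prog_const 0 = Zr"
| "prog_const (Suc n) = Comp Sc [prog_const n]"

lemma eval_prog_const: "eval (prog_const n) xs n"
  by (induction n) (auto intro: eval_Comp1 ev_Sc ev_Zr)

lemmas eval_basic_intros =
  eval_Comp1 eval_Comp2 eval_Comp3 eval_Proj_0 eval_Proj_1 eval_Proj_2 eval_Proj_3
  ev_Sc ev_Zr eval_prog_const

definition prog_add :: recf where
  "prog_add = Prim (Proj 0) (Comp Sc [Proj 0])"

lemma eval_prog_add: "eval prog_add [m, n] (m + n)"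
  unfolding prog_add_def
  by (rule eval_Prim[where h = "\<lambda>m. m + n"]; rule eval_value_eq, (rule eval_basic_intros)+, simp)

definition prog_pred :: recf where
  "prog_pred = Prim Zr (Proj 1)"

lemma eval_prog_pred: "eval prog_pred [n] (n - 1)"
  unfolding prog_pred_def
  by (rule eval_Prim[where h = "\<lambda>n. n - 1"]; rule eval_value_eq, (rule eval_basic_intros)+, simp)

definition prog_minus :: recf where
  "prog_minus = Comp (Prim (Proj 0) (Comp prog_pred [Proj 0])) [Proj 1, Proj 0]"

lemma eval_prog_minus: "eval prog_minus [m, n] (m - n)"
proof -
  have "eval (Prim (Proj 0) (Comp prog_pred [Proj 0])) [n, m] (m - n)"
    by (rule eval_Prim[where h = "\<lambda>n. m - n"];
        rule eval_value_eq, (rule eval_basic_intros eval_prog_pred)+, simp)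
  then show ?thesis
    unfolding prog_minus_def by (rule eval_Comp2[OF eval_Proj_1 eval_Proj_0])
qed

(* Primitive recursion on z, used only to distinguish z = 0 from z = Suc n. *)
definition prog_if_zero :: recf where
  "prog_if_zero = Prim (Proj 0) (Proj 3)"

lemma eval_prog_if_zero: "eval prog_if_zero [z, a, b] (if z = 0 then a else b)"
  unfolding prog_if_zero_def
  by (rule eval_Prim[where h = "\<lambda>z. if z = 0 then a else b"]; rule eval_value_eq, (rule eval_basic_intros)+, simp)

definition prog_is_zero :: recf where
  "prog_is_zero = Prim (prog_const 1) Zr"

lemma eval_prog_is_zero: "eval prog_is_zero [z] (of_bool (z = 0))"
  unfolding prog_is_zero_def
  by (rule eval_Prim[where h = "\<lambda>z. of_bool (z = 0)"]; rule eval_value_eq, (rule eval_basic_intros)+, simp)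

definition prog_eq :: recf where
  "prog_eq = Comp prog_is_zero [Comp prog_add [prog_minus, Comp prog_minus [Proj 1, Proj 0]]]"

lemma eval_prog_eq: "eval prog_eq [m, n] (of_bool (m = n))"
  unfolding prog_eq_def
  by (rule eval_value_eq, (rule eval_basic_intros eval_prog_is_zero eval_prog_add eval_prog_minus)+) auto

definition prog_le :: recf where
  "prog_le = Comp prog_is_zero [prog_minus]"

lemma eval_prog_le: "eval prog_le [m, n] (of_bool (m \<le> n))"
  unfolding prog_le_def
  by (rule eval_value_eq, (rule eval_basic_intros eval_prog_is_zero eval_prog_minus)+) auto

definition prog_triangle :: recf where
  "prog_triangle = Prim Zr (Comp prog_add [Proj 0, Comp Sc [Proj 1]])"

lemma eval_prog_triangle: "eval prog_triangle [n] (triangle n)"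
  unfolding prog_triangle_def
  by (rule eval_Prim[where h = triangle]; rule eval_value_eq, (rule eval_basic_intros eval_prog_add)+, simp)

definition prog_prod_encode :: recf where
  "prog_prod_encode = Comp prog_add [Comp prog_triangle [prog_add], Proj 0]"

lemma eval_prog_prod_encode: "eval prog_prod_encode [a, b] (prod_encode (a, b))"
  unfolding prog_prod_encode_def
  by (rule eval_value_eq, (rule eval_basic_intros eval_prog_add eval_prog_triangle)+, simp add: prod_encode_def)

lemma triangle_mono: "m \<le> n \<Longrightarrow> triangle m \<le> triangle n"
  by (induction n) (auto simp: le_Suc_eq)

lemma le_triangle: "n \<le> triangle n"
  by (induction n) auto

definition triangle_count :: "nat \<Rightarrow> nat \<Rightarrow> nat" where
  "triangle_count k x = (\<Sum>s<k. of_bool (triangle (Suc s) \<le> x))"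

lemma triangle_count_eq:
  assumes "triangle s \<le> x" "x < triangle (Suc s)"
  shows "triangle_count k x = min k s"
proof (induction k)
  case (Suc k)
  have "triangle (Suc k) \<le> x \<longleftrightarrow> Suc k \<le> s"
    using assms triangle_mono[of "Suc s" "Suc k"] triangle_mono[of "Suc k" s] by linarith
  with Suc.IH show ?case
    unfolding triangle_count_def by auto
qed (simp add: triangle_count_def)

lemma triangle_count_prod_encode:
  "triangle_count (prod_encode (a, b)) (prod_encode (a, b)) = a + b"
proof -
  have "a + b \<le> prod_encode (a, b)"
    unfolding prod_encode_def using le_triangle[of "a + b"] by simp
  then show ?thesis
    by (subst triangle_count_eq[of "a + b"]) (auto simp: prod_encode_def)
qed

definition prog_triangle_count :: recf where
  "prog_triangle_count =
     Prim Zr (Comp prog_add [Proj 0, Comp prog_le [Comp prog_triangle [Comp Sc [Proj 1]], Proj 2]])"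

lemma eval_prog_triangle_count: "eval prog_triangle_count [k, x] (triangle_count k x)"
  unfolding prog_triangle_count_def
  by (rule eval_Prim[where h = "\<lambda>k. triangle_count k x"];
      rule eval_value_eq, (rule eval_basic_intros eval_prog_add eval_prog_le eval_prog_triangle)+,
      simp add: triangle_count_def)

definition prog_prod_decode_sum :: recf where
  "prog_prod_decode_sum = Comp prog_triangle_count [Proj 0, Proj 0]"

lemma eval_prog_prod_decode_sum:
  "eval prog_prod_decode_sum [x] (fst (prod_decode x) + snd (prod_decode x))"
proof -
  have "eval prog_prod_decode_sum [x] (triangle_count x x)"
    unfolding prog_prod_decode_sum_def by ((rule eval_basic_intros eval_prog_triangle_count)+)
  then show ?thesis
    using triangle_count_prod_encode[of "fst (prod_decode x)" "snd (prod_decode x)"] by simp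
qed

definition prog_fst :: recf where
  "prog_fst = Comp prog_minus [Proj 0, Comp prog_triangle [prog_prod_decode_sum]]"

lemma eval_prog_fst: "eval prog_fst [x] (fst (prod_decode x))"
proof -
  obtain a b where x: "x = prod_encode (a, b)"
    by (metis prod_decode_inverse prod.collapse)
  show ?thesis
    unfolding prog_fst_def
    by (rule eval_value_eq, (rule eval_basic_intros eval_prog_minus eval_prog_triangle eval_prog_prod_decode_sum)+)
      (simp add: x, simp add: prod_encode_def)
qed

definition prog_snd :: recf where
  "prog_snd = Comp prog_minus [prog_prod_decode_sum, prog_fst]"

lemma eval_prog_snd: "eval prog_snd [x] (snd (prod_decode x))"
  unfolding prog_snd_def
  by (rule eval_value_eq, (rule eval_basic_intros eval_prog_minus eval_prog_fst eval_prog_prod_decode_sum)+) simp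

definition prog_hd :: recf where
  "prog_hd = Comp prog_fst [prog_pred]"

lemma eval_prog_hd: "eval prog_hd [c] (fst (prod_decode (c - 1)))"
  unfolding prog_hd_def by (rule eval_basic_intros eval_prog_fst eval_prog_pred)+

definition prog_tl :: recf where
  "prog_tl = Comp prog_snd [prog_pred]"

lemma snd_prod_decode_list_encode: "snd (prod_decode (list_encode xs - 1)) = list_encode (tl xs)"
proof (cases xs)
  case Nil
  have "prod_decode 0 = (0, 0)"
    using prod_encode_inverse[of "(0, 0)"] by (simp add: prod_encode_def)
  with Nil show ?thesis by simp
qed simp

lemma eval_prog_tl: "eval prog_tl [c] (list_encode (tl (list_decode c)))"
proof -
  have "eval prog_tl [c] (snd (prod_decode (c - 1)))"
    unfolding prog_tl_def by (rule eval_basic_intros eval_prog_snd eval_prog_pred)+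
  then show ?thesis
    using snd_prod_decode_list_encode[of "list_decode c"] by simp
qed

definition prog_drop :: recf where
  "prog_drop = Prim (Proj 0) (Comp prog_tl [Proj 0])"

lemma eval_prog_drop: "eval prog_drop [k, c] (list_encode (drop k (list_decode c)))"
  unfolding prog_drop_def
  by (rule eval_Prim[where h = "\<lambda>k. list_encode (drop k (list_decode c))"];
      rule eval_value_eq, (rule eval_basic_intros eval_prog_tl)+, simp add: drop_Suc tl_drop)

lemma take_Suc_eq_snoc: "drop k xs = y # ys \<Longrightarrow> take (Suc k) xs = take k xs @ [y]"
  using take_add[of k 1 xs] by simp

definition prog_rev_take :: recf where
  "prog_rev_take = Prim Zr
     (Comp prog_if_zero [Comp prog_drop [Proj 1, Proj 2], Proj 0,
        Comp Sc [Comp prog_prod_encode [Comp prog_hd [Comp prog_drop [Proj 1, Proj 2]], Proj 0]]])"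

lemma rev_take_Suc_code:
  "(if list_encode (drop k xs) = 0 then list_encode (rev (take k xs))
    else Suc (prod_encode (fst (prod_decode (list_encode (drop k xs) - 1)), list_encode (rev (take k xs)))))
   = list_encode (rev (take (Suc k) xs))"
  by (cases "drop k xs") (simp_all add: take_Suc_eq_snoc)

lemma eval_prog_rev_take: "eval prog_rev_take [k, c] (list_encode (rev (take k (list_decode c))))"
  unfolding prog_rev_take_def
  by (rule eval_Prim[where h = "\<lambda>k. list_encode (rev (take k (list_decode c)))"];
      rule eval_value_eq,
      (rule eval_basic_intros eval_prog_if_zero eval_prog_drop eval_prog_prod_encode eval_prog_hd)+)
    (simp, rule rev_take_Suc_code)

lemma length_le_list_encode: "length xs \<le> list_encode xs"
proof (induction xs)
  case (Cons x xs)
  then show ?case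
    using le_prod_encode_2[of "list_encode xs" x] by simp
qed simp

definition prog_rev :: recf where
  "prog_rev = Comp prog_rev_take [Proj 0, Proj 0]"

lemma eval_prog_rev: "eval prog_rev [c] (list_encode (rev (list_decode c)))"
  unfolding prog_rev_def
  by (rule eval_value_eq, (rule eval_basic_intros eval_prog_rev_take)+)
    (use length_le_list_encode[of "list_decode c"] in simp)

section \<open>Deciding the tree order of the Kleene tree\<close>

lemma tree_order_code_iff:
  "(i, j) \<in> tree_order T \<longleftrightarrow>
     j = 0 \<or> (i \<noteq> 0 \<and> 2 \<le> j \<and> list_encode (tl (list_decode (j - 1))) = i - 1
              \<and> rev (list_decode (j - 1)) \<in> T)"
  (is "_ \<longleftrightarrow> _ \<or> ?edge")
proof
  assume "(i, j) \<in> tree_order T"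
  then consider "j = 0" | l x where "i = node l" "j = node (l @ [x])" "l @ [x] \<in> T"
    unfolding tree_order_def by blast
  then show "j = 0 \<or> ?edge"
    by cases (simp_all add: node_def)
next
  assume "j = 0 \<or> ?edge"
  then show "(i, j) \<in> tree_order T"
  proof
    assume "j = 0"
    then show ?thesis
      unfolding tree_order_def by blast
  next
    assume edge: ?edge
    define M where "M = list_decode (j - 1)"
    from edge have i: "i \<noteq> 0" "list_encode (tl M) = i - 1" and j: "2 \<le> j" and T: "rev M \<in> T"
      unfolding M_def by auto
    have j_code: "j = Suc (list_encode M)"
      using j by (simp add: M_def)
    with j obtain x M' where M: "M = x # M'"
      by (cases M) auto
    have "i = node (rev M')"
      using i by (simp add: node_def M)
    moreover have "j = node (rev M' @ [x])"
      by (simp add: node_def j_code M)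
    moreover have "rev M' @ [x] \<in> T"
      using T by (simp add: M)
    ultimately show ?thesis
      unfolding tree_order_def by blast
  qed
qed

lemma kleene_tree_code_iff:
  "(\<Sum>k<Suc c. of_bool (R p (list_encode (rev (drop k (list_decode c)))))) = (0 :: nat)
     \<longleftrightarrow> rev (list_decode c) \<in> kleene_tree R p"
proof -
  define l where "l = rev (list_decode c)"
  have len: "length l \<le> c"
    unfolding l_def using length_le_list_encode[of "list_decode c"] by simp
  have "rev (drop k (list_decode c)) = take (length l - k) l" for k
    unfolding l_def by (simp add: rev_drop)
  then have "(\<Sum>k<Suc c. of_bool (R p (list_encode (rev (drop k (list_decode c)))))) = (0 :: nat)
      \<longleftrightarrow> (\<forall>k\<le>c. \<not> R p (list_encode (take (length l - k) l)))"
    by (auto simp: lessThan_Suc_atMost)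
  also have "\<dots> \<longleftrightarrow> (\<forall>m\<le>length l. \<not> R p (list_encode (take m l)))"
    using len by (metis diff_diff_cancel diff_le_self le_trans)
  finally show ?thesis
    unfolding kleene_tree_def l_def by simp
qed

definition prog_prefix_hits :: "recf \<Rightarrow> recf" where
  "prog_prefix_hits r0 =
     Prim Zr (Comp prog_add [Proj 0, Comp r0 [Proj 2, Comp prog_rev [Comp prog_drop [Proj 1, Proj 3]]]])"

lemma eval_prog_prefix_hits:
  assumes r0: "\<And>a b. eval r0 [a, b] (of_bool (R a b))"
  shows "eval (prog_prefix_hits r0) [n, p, c]
           (\<Sum>k<n. of_bool (R p (list_encode (rev (drop k (list_decode c))))))"
  unfolding prog_prefix_hits_def
  by (rule eval_Prim[where h = "\<lambda>n. \<Sum>k<n. of_bool (R p (list_encode (rev (drop k (list_decode c)))))"];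
      rule eval_value_eq, (rule eval_basic_intros eval_prog_add eval_prog_rev eval_prog_drop r0)+, simp)

definition prog_notin_tree_order :: "recf \<Rightarrow> recf" where
  "prog_notin_tree_order r0 =
     Comp prog_if_zero [Proj 2, prog_const 0,
       Comp prog_add
        [Comp prog_add [Comp prog_is_zero [Proj 1], Comp prog_le [Proj 2, prog_const 1]],
         Comp prog_add
          [Comp prog_is_zero [Comp prog_eq [Comp prog_tl [Comp prog_pred [Proj 2]], Comp prog_pred [Proj 1]]],
           Comp (prog_prefix_hits r0) [Comp Sc [Comp prog_pred [Proj 2]], Proj 0, Comp prog_pred [Proj 2]]]]]"

lemma eval_prog_notin_tree_order:
  assumes r0: "\<And>a b. eval r0 [a, b] (of_bool (R a b))"
  shows "\<exists>v. eval (prog_notin_tree_order r0) [p, i, j] v \<and> (v = 0 \<longleftrightarrow> (i, j) \<in> tree_order (kleene_tree R p))"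
proof (intro exI conjI)
  define hits where
    "hits = (\<Sum>k<Suc (j - 1). of_bool (R p (list_encode (rev (drop k (list_decode (j - 1)))))) :: nat)"
  define v where
    "v = (if j = 0 then 0
          else (of_bool (i = 0) + of_bool (j \<le> 1))
             + (of_bool (of_bool (list_encode (tl (list_decode (j - 1))) = i - 1) = (0 :: nat)) + hits))"
  show "eval (prog_notin_tree_order r0) [p, i, j] v"
    unfolding prog_notin_tree_order_def v_def hits_def
    by (rule eval_basic_intros eval_prog_if_zero eval_prog_add eval_prog_is_zero eval_prog_le
        eval_prog_eq eval_prog_tl eval_prog_pred eval_prog_prefix_hits[OF r0])+
  have "hits = 0 \<longleftrightarrow> rev (list_decode (j - 1)) \<in> kleene_tree R p"
    unfolding hits_def by (rule kleene_tree_code_iff)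
  then show "v = 0 \<longleftrightarrow> (i, j) \<in> tree_order (kleene_tree R p)"
    unfolding v_def tree_order_code_iff by auto
qed

(* The body ignores the search variable, so the search halts iff the body returns 0. *)
definition prog_tree_order_search :: "recf \<Rightarrow> recf" where
  "prog_tree_order_search r0 =
     Mn (Comp (prog_notin_tree_order r0) [Proj 1, Comp prog_fst [Proj 2], Comp prog_snd [Proj 2]])"

lemma prog_tree_order_search_halts_iff:
  assumes r0: "\<And>a b. eval r0 [a, b] (of_bool (R a b))"
  shows "(\<exists>y. eval (prog_tree_order_search r0) [p, x] y) \<longleftrightarrow> prod_decode x \<in> tree_order (kleene_tree R p)"
proof -
  obtain v where v: "eval (prog_notin_tree_order r0) [p, fst (prod_decode x), snd (prod_decode x)] v"
      "v = 0 \<longleftrightarrow> prod_decode x \<in> tree_order (kleene_tree R p)"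
    using eval_prog_notin_tree_order[OF r0] by fastforce
  have "eval (Comp (prog_notin_tree_order r0) [Proj 1, Comp prog_fst [Proj 2], Comp prog_snd [Proj 2]])
          [a, p, x] v" for a
    by (rule eval_Comp3 eval_Comp1 eval_Proj_1 eval_Proj_2 eval_prog_fst eval_prog_snd v(1))+
  then show ?thesis
    unfolding prog_tree_order_search_def using eval_Mn_halts_iff v(2) by blast
qed

section \<open>Codes of programs\<close>

lemma encode_inject: "encode r = encode s \<Longrightarrow> r = s"
proof (induction r arbitrary: s)
  case (Comp f gs)
  show ?case
  proof (cases s)
    case (Comp f' gs')
    with Comp.prems have codes: "encode f = encode f'" "map encode gs = map encode gs'"
      by (auto simp: list_encode_eq)
    from codes(1) have "f = f'"
      by (rule Comp.IH(1))
    moreover from codes(2) Comp.IH(2) have "gs = gs'"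
    proof (induction gs arbitrary: gs')
      case (Cons g gs)
      then show ?case by (cases gs') auto
    qed simp
    ultimately show ?thesis
      using \<open>s = Comp f' gs'\<close> by simp
  qed (use Comp.prems in auto)
next
  case (Prim f g)
  then show ?case by (cases s) (auto dest: Prim.IH)
next
  case (Mn f)
  then show ?case by (cases s) (auto dest: Mn.IH)
qed (case_tac s; simp)+

lemma W_encode: "W (encode r) = {x. \<exists>y. eval r [x] y}"
  unfolding W_def using encode_inject by blast

lemma W_encode_Comp_const:
  "W (encode (Comp f [prog_const p, Proj 0])) = {x. \<exists>y. eval f [p, x] y}"
proof -
  have "eval (Comp f [prog_const p, Proj 0]) [x] y \<longleftrightarrow> eval f [p, x] y" for x y
    by (rule eval_Comp_iff) (simp add: eval_prog_const eval_Proj_0)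
  then show ?thesis
    unfolding W_encode by blast
qed

definition prog_code_const :: recf where
  "prog_code_const =
     Prim (prog_const (encode Zr))
       (Comp prog_prod_encode [prog_const 3, Comp prog_prod_encode [prog_const (encode Sc),
          Comp Sc [Comp prog_prod_encode [Proj 0, Zr]]]])"

lemma eval_prog_code_const: "eval prog_code_const [n] (encode (prog_const n))"
  unfolding prog_code_const_def
  by (rule eval_Prim[where h = "\<lambda>n. encode (prog_const n)"];
      rule eval_value_eq, (rule eval_basic_intros eval_prog_prod_encode)+, simp)

(* The s-m-n function: from p it computes the code of the program x \<mapsto> f(p, x). *)
definition prog_smn :: "recf \<Rightarrow> recf" where
  "prog_smn f =
     Comp prog_prod_encode [prog_const 3, Comp prog_prod_encode [prog_const (encode f),
       Comp Sc [Comp prog_prod_encode [prog_code_const, prog_const (list_encode [encode (Proj 0)])]]]]"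

lemma eval_prog_smn:
  "eval (prog_smn f) [p] (encode (Comp f [prog_const p, Proj 0]))"
  unfolding prog_smn_def
  by (rule eval_value_eq, (rule eval_basic_intros eval_prog_prod_encode eval_prog_code_const)+) simp

lemma ce_set_UNIV: "ce_set UNIV"
proof -
  have "W (encode Zr) = UNIV"
    unfolding W_encode using ev_Zr by blast
  then show ?thesis
    unfolding ce_set_def by metis
qed

theorem theorem25:
  fixes F :: "nat set"
  assumes "Pi11 F"
  shows "\<exists>g. computable g \<and>
    (\<forall>p. ce_space_index (g p) \<and>
         (p \<in> F \<longrightarrow> metrizable_space (iota (g p))) \<and>
         (p \<notin> F \<longrightarrow> \<not> t1_space (iota (g p))))"
proof -
  obtain R where R: "computable_rel2 R"
    and F: "\<And>p. p \<in> F \<longleftrightarrow> (\<forall>f::nat \<Rightarrow> nat. \<exists>n. R p (list_encode (map f [0..<n])))"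
    using assms unfolding Pi11_def by blast
  from R obtain r0 where r0: "\<And>a b. eval r0 [a, b] (of_bool (R a b))"
    unfolding computable_rel2_def of_bool_def by blast
  define g where "g p = encode (Comp (prog_tree_order_search r0) [prog_const p, Proj 0])" for p
  have V: "V (g p) = tree_order (kleene_tree R p)" for p
    unfolding V_def g_def W_encode_Comp_const
    using prog_tree_order_search_halts_iff[OF r0] by auto
  have "computable g"
    unfolding computable_def g_def using eval_prog_smn by blast
  moreover have "ce_space_index (g p)" for p
    unfolding ce_space_index_def V using basic_open_tree_order_nonempty ce_set_UNIV by simp
  moreover have "metrizable_space (iota (g p))" if "p \<in> F" for p
    unfolding iota_def V
    using that F branch_in_kleene_tree_iff kleene_tree_prefix_closed
    by (metis metrizable_space_topspace_singleton topspace_ideal_space_tree_order)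
  moreover have "\<not> t1_space (iota (g p))" if p: "p \<notin> F" for p
  proof -
    obtain f :: "nat \<Rightarrow> nat" where "\<forall>n. \<not> R p (list_encode (map f [0..<n]))"
      using p F by blast
    then show ?thesis
      unfolding iota_def V
      using branch_in_kleene_tree_iff not_t1_space_ideal_space_tree_order by blast
  qed
  ultimately show ?thesis
    by blast
qed

end
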